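(* Let $(Q_0,R_0,L_0)$ denote a fixed point of the dynamical system $\frac{dQ}{dt}=\eta\frac{I_1}{Q}-\eta\zeta Q$, $\frac{dR}{dt}=\eta\frac{Q}{L^2}I_3-\eta\frac{R}{L^2}I_1-\eta^2\frac{Q^2R}{2L^4}I_2$, $\frac{dL}{dt}=\eta^2\frac{Q^2}{2L^3}I_2$. Assume the learning rate $\eta$ is sufficiently small when training converges (so that terms of order $\eta^2$ can be neglected) and $\mathbf{x}\sim\mathcal{N}(0,\frac{1}{N}\mathbf{I})$. If the activation function $g$ is ReLU, then $Q_0=\frac{1}{2\zeta+1}$, $R_0=1$, and $L_0$ can be arbitrary.
   Context: Teacher-student setting for a single-layer perceptron trained by online SGD with learning rate $\eta$. The teacher outputs $g(\mathbf{w}^{\ast T}\mathbf{x})$ with $\frac{1}{N}\mathbf{w}^{\ast T}\mathbf{w}^\ast=1$; the student (batch normalization represented as weight normalization plus gamma decay) outputs $g(\tilde{\mathbf{w}}^T\mathbf{x})$ with normalized weight $\tilde{\mathbf{w}}=\sqrt{N}\gamma\frac{\mathbf{w}}{\|\mathbf{w}\|_2}$; the per-sample loss is $[g(\mathbf{w}^{\ast T}\mathbf{x})-g(\tilde{\mathbf{w}}^T\mathbf{x})]^2+\zeta\gamma^2$ with decay coefficient $\zeta$, and teacher and student share the same activation $g$. Order parameters: $Q=\gamma$ (so $\frac1N\tilde{\mathbf w}^T\tilde{\mathbf w}=Q^2$), $R=\frac{1}{N\gamma}\tilde{\mathbf{w}}^T\mathbf{w}^\ast$ (overlap between student and teacher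 directions), $L^2=\frac1N\mathbf{w}^T\mathbf{w}$. With $\delta=g'(\tilde{\mathbf{w}}^T\mathbf{x})[g(\mathbf{w}^{\ast T}\mathbf{x})-g(\tilde{\mathbf{w}}^T\mathbf{x})]$, define $I_1=\mathbb{E}_{\mathbf{x}}[\delta\,\tilde{\mathbf{w}}^T\mathbf{x}]$, $I_2=\mathbb{E}_{\mathbf{x}}[\delta^2\mathbf{x}^T\mathbf{x}]$, $I_3=\mathbb{E}_{\mathbf{x}}[\delta\,\mathbf{w}^{\ast T}\mathbf{x}]$. The dynamical system is obtained in the thermodynamic limit $N\to\infty$ with continuous time $t=j/N$ ($j$ the SGD step). *)

theory Defs
  imports "HOL-Probability.Probability"
begin

(* ReLU activation and its (a.e.) derivative; the value of g' at 0 is irrelevant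
   (a null set for the Gaussian), we take g'(0) = 0. *)
definition relu :: "real \<Rightarrow> real" where
  "relu s = max s 0"

definition relu' :: "real \<Rightarrow> real" where
  "relu' s = (if s > 0 then 1 else 0)"

definition gauss2 :: "(real \<times> real) measure" where
  "gauss2 = density (lborel \<Otimes>\<^sub>M lborel)
             (\<lambda>(z1, z2). ennreal (std_normal_density z1 * std_normal_density z2))"

(* For x ~ N(0, I/N), the pre-activations u = w~^T x (student) and v = w*^T x (teacher)
   are jointly Gaussian, centred, with Var u = Q^2, Cov(u,v) = Q R, Var v = 1.
   They are realised as  v = z1,  u = Q (R z1 + sqrt(1 - R^2) z2)  (|R| \<le> 1). *)
definition stu_pre :: "real \<Rightarrow> real \<Rightarrow> real \<times> real \<Rightarrow> real" where
  "stu_pre Q R z = Q * (R * fst z + sqrt (1 - R\<^sup>2) * snd z)"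

definition tea_pre :: "real \<times> real \<Rightarrow> real" where
  "tea_pre z = fst z"

definition delta :: "(real \<Rightarrow> real) \<Rightarrow> (real \<Rightarrow> real) \<Rightarrow> real \<Rightarrow> real \<Rightarrow> real \<times> real \<Rightarrow> real" where
  "delta g g' Q R z = g' (stu_pre Q R z) * (g (tea_pre z) - g (stu_pre Q R z))"

definition I1 :: "(real \<Rightarrow> real) \<Rightarrow> (real \<Rightarrow> real) \<Rightarrow> real \<Rightarrow> real \<Rightarrow> real" where
  "I1 g g' Q R = (\<integral>z. delta g g' Q R z * stu_pre Q R z \<partial>gauss2)"

definition I3 :: "(real \<Rightarrow> real) \<Rightarrow> (real \<Rightarrow> real) \<Rightarrow> real \<Rightarrow> real \<Rightarrow> real" where
  "I3 g g' Q R = (\<integral>z. delta g g' Q R z * tea_pre z \<partial>gauss2)"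

(* Right-hand sides of the dynamical system with the O(eta^2) terms neglected
   (small learning rate):  dQ/dt = eta I1/Q - eta zeta Q,
   dR/dt = eta Q/L^2 I3 - eta R/L^2 I1,   dL/dt = 0. *)
definition dQ :: "(real \<Rightarrow> real) \<Rightarrow> (real \<Rightarrow> real) \<Rightarrow> real \<Rightarrow> real \<Rightarrow> real \<Rightarrow> real \<Rightarrow> real \<Rightarrow> real" where
  "dQ g g' \<eta> \<zeta> Q R L = \<eta> * I1 g g' Q R / Q - \<eta> * \<zeta> * Q"

definition dR :: "(real \<Rightarrow> real) \<Rightarrow> (real \<Rightarrow> real) \<Rightarrow> real \<Rightarrow> real \<Rightarrow> real \<Rightarrow> real \<Rightarrow> real \<Rightarrow> real" where
  "dR g g' \<eta> \<zeta> Q R L = \<eta> * Q / L\<^sup>2 * I3 g g' Q R - \<eta> * R / L\<^sup>2 * I1 g g' Q R"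

definition dL :: "(real \<Rightarrow> real) \<Rightarrow> (real \<Rightarrow> real) \<Rightarrow> real \<Rightarrow> real \<Rightarrow> real \<Rightarrow> real \<Rightarrow> real \<Rightarrow> real" where
  "dL g g' \<eta> \<zeta> Q R L = 0"

definition is_fixed_point ::
  "(real \<Rightarrow> real) \<Rightarrow> (real \<Rightarrow> real) \<Rightarrow> real \<Rightarrow> real \<Rightarrow> real \<Rightarrow> real \<Rightarrow> real \<Rightarrow> bool" where
  "is_fixed_point g g' \<eta> \<zeta> Q R L \<longleftrightarrow>
     dQ g g' \<eta> \<zeta> Q R L = 0 \<and> dR g g' \<eta> \<zeta> Q R L = 0 \<and> dL g g' \<eta> \<zeta> Q R L = 0"

end

theory Submission
  imports Defs
begin

(* Write v = z1 for the teacher and u = Q (R z1 + s z2), s = sqrt (1 - R^2), for the student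
   pre-activation.  For R = 1 we have u = Q v, so I1 = Q I3 and dR vanishes identically, while
   I1 = Q (1 - Q) E[relu(v)^2] = Q (1 - Q) / 2 makes dQ vanish exactly at Q = 1 / (2 zeta + 1).
   For R = -1, I1 = - Q^2 / 2 < 0 so dQ < 0.  For |R| < 1, Q I3 - R I1 = Q s E[delta w]
   with w = s z1 - R z2 the coordinate orthogonal to the student direction; the Gaussian is
   invariant under the reflection exchanging z1 with that direction and under w -> -w, and
   averaging over both turns delta w into w times an increment of the monotone relu, so
   E[delta w] > 0 and dR > 0. *)

section \<open>Shears of the Lebesgue plane\<close>

lemma lborel_pair_distr_eqI:
  fixes T :: "real \<times> real \<Rightarrow> real \<times> real"
  assumes [measurable]: "T \<in> lborel \<Otimes>\<^sub>M lborel \<rightarrow>\<^sub>M lborel \<Otimes>\<^sub>M lborel"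
    and preserves: "\<And>A. A \<in> sets (lborel \<Otimes>\<^sub>M lborel) \<Longrightarrow>
      (\<integral>\<^sup>+ z. indicator A (T z) \<partial>(lborel \<Otimes>\<^sub>M lborel)) = emeasure (lborel \<Otimes>\<^sub>M lborel) A"
  shows "distr (lborel \<Otimes>\<^sub>M lborel) (lborel \<Otimes>\<^sub>M lborel) T = lborel \<Otimes>\<^sub>M lborel"
proof (rule measure_eqI)
  fix A assume A[measurable]: "A \<in> sets (distr (lborel \<Otimes>\<^sub>M lborel) (lborel \<Otimes>\<^sub>M lborel) T)"
  have "emeasure (distr (lborel \<Otimes>\<^sub>M lborel) (lborel \<Otimes>\<^sub>M lborel) T) A
      = (\<integral>\<^sup>+ z. indicator A (T z) \<partial>(lborel \<Otimes>\<^sub>M lborel))"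
    using A by (simp add: nn_integral_indicator[symmetric] nn_integral_distr del: nn_integral_indicator)
  then show "emeasure (distr (lborel \<Otimes>\<^sub>M lborel) (lborel \<Otimes>\<^sub>M lborel) T) A = emeasure (lborel \<Otimes>\<^sub>M lborel) A"
    using preserves A by simp
qed simp

lemma lborel_pair_distr_shear_fst:
  fixes f :: "real \<Rightarrow> real"
  assumes [measurable]: "f \<in> borel_measurable borel"
  shows "distr (lborel \<Otimes>\<^sub>M lborel) (lborel \<Otimes>\<^sub>M lborel) (\<lambda>(x, y). (x + f y, y)) = lborel \<Otimes>\<^sub>M lborel"
proof (rule lborel_pair_distr_eqI)
  fix A :: "(real \<times> real) set" assume A[measurable]: "A \<in> sets (lborel \<Otimes>\<^sub>M lborel)"
  have "(\<integral>\<^sup>+ z. indicator A ((\<lambda>(x, y). (x + f y, y)) z) \<partial>(lborel \<Otimes>\<^sub>M lborel))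
      = (\<integral>\<^sup>+ y. \<integral>\<^sup>+ x. indicator A (f y + 1 * x, y) \<partial>lborel \<partial>lborel)"
    by (subst lborel_pair.nn_integral_snd[symmetric]) (auto simp: add.commute)
  also have "\<dots> = (\<integral>\<^sup>+ y. \<integral>\<^sup>+ x. indicator A (x, y) \<partial>lborel \<partial>lborel)"
  proof (rule nn_integral_cong)
    fix y :: real
    show "(\<integral>\<^sup>+ x. indicator A (f y + 1 * x, y) \<partial>lborel) = (\<integral>\<^sup>+ x. indicator A (x, y) \<partial>lborel)"
      using nn_integral_real_affine[of "\<lambda>x. indicator A (x, y)" 1 "f y"] by simp
  qed
  also have "\<dots> = emeasure (lborel \<Otimes>\<^sub>M lborel) A"
    using lborel_pair.nn_integral_snd[of "indicator A"] A by simp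
  finally show "(\<integral>\<^sup>+ z. indicator A ((\<lambda>(x, y). (x + f y, y)) z) \<partial>(lborel \<Otimes>\<^sub>M lborel))
      = emeasure (lborel \<Otimes>\<^sub>M lborel) A" .
qed simp

lemma lborel_pair_distr_reflect_shear_snd:
  fixes f :: "real \<Rightarrow> real"
  assumes [measurable]: "f \<in> borel_measurable borel"
  shows "distr (lborel \<Otimes>\<^sub>M lborel) (lborel \<Otimes>\<^sub>M lborel) (\<lambda>(x, y). (x, f x - y)) = lborel \<Otimes>\<^sub>M lborel"
proof (rule lborel_pair_distr_eqI)
  fix A :: "(real \<times> real) set" assume A[measurable]: "A \<in> sets (lborel \<Otimes>\<^sub>M lborel)"
  have "(\<integral>\<^sup>+ z. indicator A ((\<lambda>(x, y). (x, f x - y)) z) \<partial>(lborel \<Otimes>\<^sub>M lborel))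
      = (\<integral>\<^sup>+ x. \<integral>\<^sup>+ y. indicator A (x, f x + (-1) * y) \<partial>lborel \<partial>lborel)"
    by (subst lborel.nn_integral_fst[symmetric]) auto
  also have "\<dots> = (\<integral>\<^sup>+ x. \<integral>\<^sup>+ y. indicator A (x, y) \<partial>lborel \<partial>lborel)"
  proof (rule nn_integral_cong)
    fix x :: real
    show "(\<integral>\<^sup>+ y. indicator A (x, f x + (-1) * y) \<partial>lborel) = (\<integral>\<^sup>+ y. indicator A (x, y) \<partial>lborel)"
      using nn_integral_real_affine[of "\<lambda>y. indicator A (x, y)" "-1" "f x"] by simp
  qed
  also have "\<dots> = emeasure (lborel \<Otimes>\<^sub>M lborel) A"
    using lborel.nn_integral_fst[of "indicator A" lborel] A by simp
  finally show "(\<integral>\<^sup>+ z. indicator A ((\<lambda>(x, y). (x, f x - y)) z) \<partial>(lborel \<Otimes>\<^sub>M lborel))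
      = emeasure (lborel \<Otimes>\<^sub>M lborel) A" .
qed simp

section \<open>The standard Gaussian on the plane\<close>

interpretation std_normal: real_distribution std_normal_distribution
  by (rule real_dist_normal_dist)

interpretation std_normal_pair: pair_prob_space std_normal_distribution std_normal_distribution ..

lemma sets_gauss2 [measurable_cong]: "sets gauss2 = sets (lborel \<Otimes>\<^sub>M lborel)"
  unfolding gauss2_def by simp

lemma gauss2_eq_pair_std_normal: "gauss2 = std_normal_distribution \<Otimes>\<^sub>M std_normal_distribution"
proof -
  have "std_normal_distribution \<Otimes>\<^sub>M std_normal_distribution
      = density (lborel \<Otimes>\<^sub>M lborel) (\<lambda>(x, y). ennreal (std_normal_density x) * ennreal (std_normal_density y))"
    by (rule pair_measure_density) (auto intro: std_normal.sigma_finite_measure_axioms sigma_finite_lborel)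
  then show ?thesis
    unfolding gauss2_def by (simp add: ennreal_mult case_prod_beta')
qed

lemma gauss2_integral_fst:
  fixes f :: "real \<Rightarrow> real"
  assumes [measurable]: "f \<in> borel_measurable borel"
  shows "(\<integral>z. f (fst z) \<partial>gauss2) = (\<integral>x. f x \<partial>std_normal_distribution)"
    and "integrable gauss2 (\<lambda>z. f (fst z)) \<longleftrightarrow> integrable std_normal_distribution f"
  using integral_distr[of fst gauss2 std_normal_distribution f]
    integrable_distr_eq[of fst gauss2 std_normal_distribution f]
  unfolding gauss2_eq_pair_std_normal std_normal.distr_pair_fst by simp_all

lemma gauss2_integrable_snd:
  fixes f :: "real \<Rightarrow> real"
  assumes [measurable]: "f \<in> borel_measurable borel" and "integrable std_normal_distribution f"
  shows "integrable gauss2 (\<lambda>z. f (snd z))"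
proof -
  have "integrable gauss2 (\<lambda>z. f (fst z))"
    using gauss2_integral_fst(2) assms by simp
  then show ?thesis
    unfolding gauss2_eq_pair_std_normal
    using std_normal_pair.integrable_product_swap_iff[of "\<lambda>z. f (snd z)"] by (simp add: case_prod_beta')
qed

lemma gauss2_integrable_quadratic_bound:
  fixes f :: "real \<times> real \<Rightarrow> real"
  assumes [measurable]: "f \<in> borel_measurable (lborel \<Otimes>\<^sub>M lborel)"
    and bound: "\<And>z. \<bar>f z\<bar> \<le> C * (\<bar>fst z\<bar> + \<bar>snd z\<bar>)\<^sup>2"
  shows "integrable gauss2 f"
proof (rule Bochner_Integration.integrable_bound)
  have "integrable std_normal_distribution (\<lambda>x. x\<^sup>2)"
    using std_normal_distribution_even_moments(2)[of 1] by simp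
  then show "integrable gauss2 (\<lambda>z. 2 * \<bar>C\<bar> * ((fst z)\<^sup>2 + (snd z)\<^sup>2))"
    using gauss2_integral_fst(2)[of "\<lambda>x. x\<^sup>2"] gauss2_integrable_snd[of "\<lambda>x. x\<^sup>2"] by simp
  have sq: "(\<bar>a\<bar> + \<bar>b\<bar>)\<^sup>2 \<le> 2 * (a\<^sup>2 + b\<^sup>2)" for a b :: real
    using zero_le_power2[of "\<bar>a\<bar> - \<bar>b\<bar>"] by (simp add: power2_eq_square algebra_simps)
  show "AE z in gauss2. norm (f z) \<le> norm (2 * \<bar>C\<bar> * ((fst z)\<^sup>2 + (snd z)\<^sup>2))"
  proof (intro AE_I2)
    fix z :: "real \<times> real"
    have "\<bar>f z\<bar> \<le> \<bar>C\<bar> * (\<bar>fst z\<bar> + \<bar>snd z\<bar>)\<^sup>2"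
      using bound[of z] by (meson abs_ge_self mult_right_mono order_trans zero_le_power2)
    also have "\<dots> \<le> \<bar>C\<bar> * (2 * ((fst z)\<^sup>2 + (snd z)\<^sup>2))"
      by (intro mult_left_mono sq) simp
    finally show "norm (f z) \<le> norm (2 * \<bar>C\<bar> * ((fst z)\<^sup>2 + (snd z)\<^sup>2))"
      by (simp add: algebra_simps)
  qed
qed simp

lemma std_normal_density_mult:
  "std_normal_density a * std_normal_density b = exp (- (a\<^sup>2 + b\<^sup>2) / 2) / (2 * pi)"
  unfolding std_normal_density_def
  by (simp add: exp_add[symmetric] field_simps real_sqrt_mult[symmetric] add_divide_distrib)

lemma gauss2_distr_eqI:
  fixes T :: "real \<times> real \<Rightarrow> real \<times> real"
  assumes [measurable]: "T \<in> lborel \<Otimes>\<^sub>M lborel \<rightarrow>\<^sub>M lborel \<Otimes>\<^sub>M lborel"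
    and lborel_preserving: "distr (lborel \<Otimes>\<^sub>M lborel) (lborel \<Otimes>\<^sub>M lborel) T = lborel \<Otimes>\<^sub>M lborel"
    and isometric: "\<And>z. (fst (T z))\<^sup>2 + (snd (T z))\<^sup>2 = (fst z)\<^sup>2 + (snd z)\<^sup>2"
  shows "distr gauss2 (lborel \<Otimes>\<^sub>M lborel) T = gauss2"
proof (rule measure_eqI)
  let ?\<phi> = "\<lambda>z. ennreal (std_normal_density (fst z) * std_normal_density (snd z))"
  have gauss2_eq: "gauss2 = density (lborel \<Otimes>\<^sub>M lborel) ?\<phi>"
    unfolding gauss2_def by (simp add: case_prod_beta')
  have \<phi>_invariant: "?\<phi> (T z) = ?\<phi> z" for z
    using isometric[of z] by (simp add: std_normal_density_mult)
  fix A assume "A \<in> sets (distr gauss2 (lborel \<Otimes>\<^sub>M lborel) T)"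
  then have A[measurable]: "A \<in> sets (lborel \<Otimes>\<^sub>M lborel)" by simp
  have T_gauss2[measurable]: "T \<in> gauss2 \<rightarrow>\<^sub>M lborel \<Otimes>\<^sub>M lborel"
    by (simp add: measurable_cong_sets[OF sets_gauss2 refl])
  have "emeasure (distr gauss2 (lborel \<Otimes>\<^sub>M lborel) T) A = (\<integral>\<^sup>+ z. indicator A (T z) \<partial>gauss2)"
    using nn_integral_distr[OF T_gauss2, of "indicator A"] A by simp
  also have "\<dots> = (\<integral>\<^sup>+ z. ?\<phi> z * indicator A (T z) \<partial>(lborel \<Otimes>\<^sub>M lborel))"
    unfolding gauss2_eq by (simp add: nn_integral_density)
  also have "\<dots> = (\<integral>\<^sup>+ z. ?\<phi> (T z) * indicator A (T z) \<partial>(lborel \<Otimes>\<^sub>M lborel))"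
    by (simp add: \<phi>_invariant)
  also have "\<dots> = (\<integral>\<^sup>+ z. ?\<phi> z * indicator A z \<partial>distr (lborel \<Otimes>\<^sub>M lborel) (lborel \<Otimes>\<^sub>M lborel) T)"
    by (simp add: nn_integral_distr)
  also have "\<dots> = emeasure gauss2 A"
    unfolding lborel_preserving gauss2_eq using A by (intro emeasure_density[symmetric]) auto
  finally show "emeasure (distr gauss2 (lborel \<Otimes>\<^sub>M lborel) T) A = emeasure gauss2 A" .
qed (simp add: sets_gauss2)

lemma gauss2_integral_invariant:
  fixes T :: "real \<times> real \<Rightarrow> real \<times> real" and f :: "real \<times> real \<Rightarrow> real"
  assumes [measurable]: "T \<in> lborel \<Otimes>\<^sub>M lborel \<rightarrow>\<^sub>M lborel \<Otimes>\<^sub>M lborel"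
    and invariant: "distr gauss2 (lborel \<Otimes>\<^sub>M lborel) T = gauss2"
    and [measurable]: "f \<in> borel_measurable (lborel \<Otimes>\<^sub>M lborel)"
  shows "(\<integral>z. f (T z) \<partial>gauss2) = integral\<^sup>L gauss2 f"
    and "integrable gauss2 (\<lambda>z. f (T z)) \<longleftrightarrow> integrable gauss2 f"
proof -
  have "T \<in> gauss2 \<rightarrow>\<^sub>M lborel \<Otimes>\<^sub>M lborel"
    by (simp add: measurable_cong_sets[OF sets_gauss2 refl])
  then show "(\<integral>z. f (T z) \<partial>gauss2) = integral\<^sup>L gauss2 f"
    and "integrable gauss2 (\<lambda>z. f (T z)) \<longleftrightarrow> integrable gauss2 f"
    using integral_distr[of T gauss2 "lborel \<Otimes>\<^sub>M lborel" f]
      integrable_distr_eq[of T gauss2 "lborel \<Otimes>\<^sub>M lborel" f] invariant by simp_all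
qed

lemma std_normal_emeasure_interval_pos:
  fixes l h :: real
  assumes "l < h"
  shows "emeasure std_normal_distribution {l<..<h} \<noteq> 0"
proof
  assume "emeasure std_normal_distribution {l<..<h} = 0"
  then have "AE x in lborel. ennreal (std_normal_density x) * indicator {l<..<h} x = 0"
    by (simp add: emeasure_density nn_integral_0_iff_AE)
  then have "AE x in lborel. x \<notin> {l<..<h}"
    by eventually_elim (auto simp: std_normal_density_def split: split_indicator)
  then have "emeasure lborel {l<..<h} = 0"
    by (subst (asm) AE_iff_measurable[where N="{l<..<h}"]) auto
  then show False
    using assms by simp
qed

lemma gauss2_integral_pos:
  fixes G :: "real \<times> real \<Rightarrow> real"
  assumes G: "integrable gauss2 G" and nonneg: "\<And>z. 0 \<le> G z"
    and "a < b" "c < d" and pos: "\<And>z. z \<in> {a<..<b} \<times> {c<..<d} \<Longrightarrow> 0 < G z"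
  shows "0 < integral\<^sup>L gauss2 G"
proof -
  have "integral\<^sup>L gauss2 G \<noteq> 0"
  proof
    assume "integral\<^sup>L gauss2 G = 0"
    then have "AE z in gauss2. G z = 0"
      using integral_nonneg_eq_0_iff_AE[OF G] nonneg by simp
    then have "AE z in gauss2. z \<notin> {a<..<b} \<times> {c<..<d}"
      by eventually_elim (use pos in force)
    then have "emeasure gauss2 ({a<..<b} \<times> {c<..<d}) = 0"
      by (subst (asm) AE_iff_measurable[where N="{a<..<b} \<times> {c<..<d}"])
         (auto simp: sets_gauss2 space_pair_measure gauss2_def)
    moreover have "emeasure gauss2 ({a<..<b} \<times> {c<..<d})
        = emeasure std_normal_distribution {a<..<b} * emeasure std_normal_distribution {c<..<d}"
      unfolding gauss2_eq_pair_std_normal by (rule std_normal.emeasure_pair_measure_Times) auto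
    ultimately show False
      using std_normal_emeasure_interval_pos \<open>a < b\<close> \<open>c < d\<close> by simp
  qed
  then show ?thesis
    using nonneg Bochner_Integration.integral_nonneg[of gauss2 G] by (simp add: less_le)
qed

lemma std_normal_integral_reflect:
  fixes f :: "real \<Rightarrow> real"
  assumes [measurable]: "f \<in> borel_measurable borel"
  shows "(\<integral>x. f (- x) \<partial>std_normal_distribution) = (\<integral>x. f x \<partial>std_normal_distribution)"
proof -
  have "(\<integral>x. f x \<partial>std_normal_distribution) = (\<integral>x. std_normal_density x * f x \<partial>lborel)"
    by (simp add: integral_density)
  also have "\<dots> = (\<integral>x. std_normal_density (- x) * f (- x) \<partial>lborel)"
    using lborel_integral_real_affine[of "-1" "\<lambda>x. std_normal_density x * f x" 0] by simp
  also have "\<dots> = (\<integral>x. f (- x) \<partial>std_normal_distribution)"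
    by (simp add: integral_density std_normal_density_def)
  finally show ?thesis ..
qed

section \<open>Reflections of the plane\<close>

(* The reflection exchanging (1, 0) with the student direction (R, sqrt (1 - R^2)). *)
definition reflection :: "real \<Rightarrow> real \<times> real \<Rightarrow> real \<times> real" where
  "reflection R z = (R * fst z + sqrt (1 - R\<^sup>2) * snd z, sqrt (1 - R\<^sup>2) * fst z - R * snd z)"

lemma reflection_measurable [measurable]: "reflection R \<in> lborel \<Otimes>\<^sub>M lborel \<rightarrow>\<^sub>M lborel \<Otimes>\<^sub>M lborel"
  unfolding reflection_def by measurable

lemma sqrt_one_minus_square:
  fixes R :: real
  assumes "\<bar>R\<bar> \<le> 1"
  shows "(sqrt (1 - R\<^sup>2))\<^sup>2 = 1 - R\<^sup>2" and "sqrt (1 - R\<^sup>2) \<le> 1"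
  using assms abs_square_le_1[of R] by simp_all

lemma reflection_isometric:
  assumes "\<bar>R\<bar> \<le> 1"
  shows "(fst (reflection R z))\<^sup>2 + (snd (reflection R z))\<^sup>2 = (fst z)\<^sup>2 + (snd z)\<^sup>2"
proof -
  have "(fst (reflection R z))\<^sup>2 + (snd (reflection R z))\<^sup>2
      = (R\<^sup>2 + (sqrt (1 - R\<^sup>2))\<^sup>2) * ((fst z)\<^sup>2 + (snd z)\<^sup>2)"
    unfolding reflection_def by (simp add: power2_eq_square algebra_simps)
  then show ?thesis
    using sqrt_one_minus_square(1)[OF assms] by simp
qed

lemma stu_pre_reflection:
  assumes "\<bar>R\<bar> \<le> 1"
  shows "stu_pre Q R (reflection R z) = Q * fst z"
proof -
  have "R * fst (reflection R z) + sqrt (1 - R\<^sup>2) * snd (reflection R z)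
      = (R\<^sup>2 + (sqrt (1 - R\<^sup>2))\<^sup>2) * fst z"
    unfolding reflection_def by (simp add: power2_eq_square algebra_simps)
  then show ?thesis
    unfolding stu_pre_def using sqrt_one_minus_square(1)[OF assms] by simp
qed

lemma reflection_orthogonal_coordinate:
  assumes "\<bar>R\<bar> \<le> 1"
  shows "sqrt (1 - R\<^sup>2) * fst (reflection R z) - R * snd (reflection R z) = snd z"
proof -
  have "sqrt (1 - R\<^sup>2) * fst (reflection R z) - R * snd (reflection R z)
      = (R\<^sup>2 + (sqrt (1 - R\<^sup>2))\<^sup>2) * snd z"
    unfolding reflection_def by (simp add: power2_eq_square algebra_simps)
  then show ?thesis
    using sqrt_one_minus_square(1)[OF assms] by simp
qed

(* Factoring into shears reduces the invariance of planar Lebesgue measure to Fubini and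
   translation invariance on the line. *)
lemma reflection_eq_shears:
  assumes "-1 < R" "R \<le> 1"
  defines "s \<equiv> sqrt (1 - R\<^sup>2)"
  defines "t \<equiv> s / (1 + R)"
  shows "reflection R = (\<lambda>(x, y). (x + - t * y, y)) \<circ> (\<lambda>(x, y). (x, s * x - y)) \<circ> (\<lambda>(x, y). (x + t * y, y))"
proof -
  have st: "s * t = 1 - R" and ts: "t * (1 + R) = s"
    using sqrt_one_minus_square(1)[of R] assms
    by (auto simp: s_def t_def field_simps power2_eq_square)
  have "x + t * y - t * (s * (x + t * y) - y) = R * x + s * y" for x y
  proof -
    have "x + t * y - t * (s * (x + t * y) - y) = x * (1 - s * t) + y * (t * (2 - s * t))"
      by (simp add: algebra_simps)
    also have "\<dots> = R * x + (t * (1 + R)) * y"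
      unfolding st by (simp add: algebra_simps)
    finally show ?thesis
      unfolding ts .
  qed
  moreover have "s * (x + t * y) - y = s * x - R * y" for x y
  proof -
    have "s * (x + t * y) - y = s * x - (1 - s * t) * y"
      by (simp add: algebra_simps)
    then show ?thesis
      unfolding st by simp
  qed
  ultimately show ?thesis
    by (simp add: reflection_def s_def[symmetric] fun_eq_iff)
qed

lemma lborel_pair_distr_reflection:
  assumes "-1 < R" "R \<le> 1"
  shows "distr (lborel \<Otimes>\<^sub>M lborel) (lborel \<Otimes>\<^sub>M lborel) (reflection R) = lborel \<Otimes>\<^sub>M lborel"
proof -
  define s where "s = sqrt (1 - R\<^sup>2)"
  define t where "t = s / (1 + R)"
  have "distr (lborel \<Otimes>\<^sub>M lborel) (lborel \<Otimes>\<^sub>M lborel) (reflection R)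
      = distr (distr (distr (lborel \<Otimes>\<^sub>M lborel) (lborel \<Otimes>\<^sub>M lborel) (\<lambda>(x, y). (x + t * y, y)))
          (lborel \<Otimes>\<^sub>M lborel) (\<lambda>(x, y). (x, s * x - y))) (lborel \<Otimes>\<^sub>M lborel) (\<lambda>(x, y). (x + - t * y, y))"
    unfolding reflection_eq_shears[OF assms] s_def[symmetric] t_def[symmetric]
    by (simp add: distr_distr o_assoc)
  then show ?thesis
    using lborel_pair_distr_shear_fst[of "\<lambda>y. t * y"] lborel_pair_distr_shear_fst[of "\<lambda>y. - t * y"]
      lborel_pair_distr_reflect_shear_snd[of "\<lambda>x. s * x"]
    by simp
qed

lemma gauss2_distr_reflection:
  assumes "-1 < R" "R \<le> 1"
  shows "distr gauss2 (lborel \<Otimes>\<^sub>M lborel) (reflection R) = gauss2"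
  using assms
  by (intro gauss2_distr_eqI lborel_pair_distr_reflection reflection_isometric reflection_measurable) auto

lemma gauss2_distr_reflect_snd:
  "distr gauss2 (lborel \<Otimes>\<^sub>M lborel) (\<lambda>z. (fst z, - snd z)) = gauss2"
  using lborel_pair_distr_reflect_shear_snd[of "\<lambda>_. 0"]
  by (intro gauss2_distr_eqI) (auto simp: case_prod_beta')

section \<open>The ReLU teacher-student integrals\<close>

lemma relu_measurable [measurable]: "relu \<in> borel_measurable borel"
  and relu'_measurable [measurable]: "relu' \<in> borel_measurable borel"
  unfolding relu_def relu'_def by measurable

lemma relu_mono: "x \<le> y \<Longrightarrow> relu x \<le> relu y"
  unfolding relu_def by simp

lemma std_normal_integral_relu_square:
  "(\<integral>x. (relu x)\<^sup>2 \<partial>std_normal_distribution) = 1 / 2"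
  "(\<integral>x. (relu (- x))\<^sup>2 \<partial>std_normal_distribution) = 1 / 2"
proof -
  have square: "integrable std_normal_distribution (\<lambda>x. x\<^sup>2)"
    and second_moment: "(\<integral>x. x\<^sup>2 \<partial>std_normal_distribution) = 1"
    using std_normal_distribution_even_moments[of 1] by simp_all
  have relu_square_split: "(relu x)\<^sup>2 + (relu (- x))\<^sup>2 = x\<^sup>2" for x
    unfolding relu_def by (simp add: max_def power2_eq_square)
  have "integrable std_normal_distribution (\<lambda>x. (relu x)\<^sup>2)"
    "integrable std_normal_distribution (\<lambda>x. (relu (- x))\<^sup>2)"
    by (auto intro!: Bochner_Integration.integrable_bound[OF square] AE_I2 simp: relu_def max_def)
  then have "(\<integral>x. (relu x)\<^sup>2 \<partial>std_normal_distribution) + (\<integral>x. (relu (- x))\<^sup>2 \<partial>std_normal_distribution) = 1"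
    by (simp add: relu_square_split second_moment flip: Bochner_Integration.integral_add)
  moreover have "(\<integral>x. (relu (- x))\<^sup>2 \<partial>std_normal_distribution) = (\<integral>x. (relu x)\<^sup>2 \<partial>std_normal_distribution)"
    by (rule std_normal_integral_reflect) simp
  ultimately show "(\<integral>x. (relu x)\<^sup>2 \<partial>std_normal_distribution) = 1 / 2"
    "(\<integral>x. (relu (- x))\<^sup>2 \<partial>std_normal_distribution) = 1 / 2"
    by simp_all
qed

lemma stu_pre_measurable [measurable]: "stu_pre Q R \<in> borel_measurable (lborel \<Otimes>\<^sub>M lborel)"
  and tea_pre_measurable [measurable]: "tea_pre \<in> borel_measurable (lborel \<Otimes>\<^sub>M lborel)"
  unfolding stu_pre_def tea_pre_def by measurable

lemma delta_relu_measurable [measurable]: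
  "delta relu relu' Q R \<in> borel_measurable (lborel \<Otimes>\<^sub>M lborel)"
  unfolding delta_def by measurable

lemma abs_stu_pre_le:
  assumes "\<bar>R\<bar> \<le> 1" "0 \<le> Q"
  shows "\<bar>stu_pre Q R z\<bar> \<le> Q * (\<bar>fst z\<bar> + \<bar>snd z\<bar>)"
proof -
  have "\<bar>R * fst z + sqrt (1 - R\<^sup>2) * snd z\<bar> \<le> \<bar>R\<bar> * \<bar>fst z\<bar> + sqrt (1 - R\<^sup>2) * \<bar>snd z\<bar>"
    using abs_triangle_ineq[of "R * fst z" "sqrt (1 - R\<^sup>2) * snd z"] assms(1)
    by (simp add: abs_mult abs_square_le_1)
  also have "\<dots> \<le> 1 * \<bar>fst z\<bar> + 1 * \<bar>snd z\<bar>"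
    using assms sqrt_one_minus_square(2)[OF assms(1)] by (intro add_mono mult_right_mono) auto
  finally show ?thesis
    unfolding stu_pre_def abs_mult using assms(2) by (simp add: mult_left_mono)
qed

lemma abs_delta_relu_le:
  assumes "\<bar>R\<bar> \<le> 1" "0 \<le> Q"
  shows "\<bar>delta relu relu' Q R z\<bar> \<le> (1 + Q) * (\<bar>fst z\<bar> + \<bar>snd z\<bar>)"
proof -
  have "\<bar>delta relu relu' Q R z\<bar> \<le> \<bar>relu (tea_pre z) - relu (stu_pre Q R z)\<bar>"
    unfolding delta_def relu'_def by (simp add: abs_mult)
  also have "\<dots> \<le> \<bar>tea_pre z\<bar> + \<bar>stu_pre Q R z\<bar>"
    unfolding relu_def by linarith
  also have "\<dots> \<le> (\<bar>fst z\<bar> + \<bar>snd z\<bar>) + Q * (\<bar>fst z\<bar> + \<bar>snd z\<bar>)"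
    using abs_stu_pre_le[OF assms, of z] unfolding tea_pre_def by simp
  finally show ?thesis
    by (simp add: algebra_simps)
qed

lemma integrable_delta_relu_mult:
  fixes w :: "real \<times> real \<Rightarrow> real"
  assumes "\<bar>R\<bar> \<le> 1" "0 \<le> Q" and [measurable]: "w \<in> borel_measurable (lborel \<Otimes>\<^sub>M lborel)"
    and w_bound: "\<And>z. \<bar>w z\<bar> \<le> C * (\<bar>fst z\<bar> + \<bar>snd z\<bar>)"
  shows "integrable gauss2 (\<lambda>z. delta relu relu' Q R z * w z)"
proof (rule gauss2_integrable_quadratic_bound[where C = "(1 + Q) * C"])
  fix z :: "real \<times> real"
  have "\<bar>delta relu relu' Q R z * w z\<bar> \<le> ((1 + Q) * (\<bar>fst z\<bar> + \<bar>snd z\<bar>)) * (C * (\<bar>fst z\<bar> + \<bar>snd z\<bar>))"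
    unfolding abs_mult using assms by (intro mult_mono abs_delta_relu_le w_bound) auto
  then show "\<bar>delta relu relu' Q R z * w z\<bar> \<le> (1 + Q) * C * (\<bar>fst z\<bar> + \<bar>snd z\<bar>)\<^sup>2"
    by (simp add: power2_eq_square algebra_simps)
qed simp

lemma relu_odd_increment_nonneg:
  assumes "0 \<le> s"
  shows "0 \<le> b * (relu (c + s * b) - relu (c - s * b))"
proof (cases "0 \<le> b")
  case True
  then have "relu (c - s * b) \<le> relu (c + s * b)"
    using assms by (intro relu_mono) simp
  then show ?thesis
    using True by simp
next
  case False
  then have "relu (c + s * b) \<le> relu (c - s * b)"
    using assms mult_nonneg_nonpos[of s b] by (intro relu_mono) simp
  then show ?thesis
    using False by (simp add: mult_nonpos_nonpos)
qed

lemma relu_symmetrized_integral_pos: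
  assumes "\<bar>R\<bar> \<le> 1" "0 < Q" "0 < s"
    and integrable: "integrable gauss2 (\<lambda>z. relu' (Q * fst z) *
      (snd z * (relu (R * fst z + s * snd z) - relu (R * fst z - s * snd z))))"
  shows "0 < (\<integral>z. relu' (Q * fst z) *
      (snd z * (relu (R * fst z + s * snd z) - relu (R * fst z - s * snd z))) \<partial>gauss2)"
proof (rule gauss2_integral_pos[OF integrable])
  show "0 \<le> relu' (Q * fst z) * (snd z * (relu (R * fst z + s * snd z) - relu (R * fst z - s * snd z)))" for z
    using assms(3) relu_odd_increment_nonneg[of s] by (simp add: relu'_def)
  show "0 < relu' (Q * fst z) * (snd z * (relu (R * fst z + s * snd z) - relu (R * fst z - s * snd z)))"
    if "z \<in> {0<..<1} \<times> {1 / s<..<1 / s + 1}" for z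
  proof -
    have a: "0 < fst z" "fst z < 1" and "1 < s * snd z"
      using that assms(3) by (auto simp: field_simps)
    moreover have "0 < snd z"
      using that assms(3) by (auto intro: less_trans[of 0 "1 / s"])
    moreover have "\<bar>R * fst z\<bar> < 1"
      using a assms(1) by (simp add: abs_mult) (smt (verit) mult_left_le_one_le)
    ultimately show ?thesis
      unfolding relu_def relu'_def using assms(2,3) by (auto simp: zero_less_mult_iff)
  qed
qed (use assms(3) in auto)

lemma relu_I3_I1_combination:
  assumes "\<bar>R\<bar> \<le> 1" "0 \<le> Q"
  defines "s \<equiv> sqrt (1 - R\<^sup>2)"
  shows "Q * I3 relu relu' Q R - R * I1 relu relu' Q R
       = Q * s * (\<integral>z. delta relu relu' Q R z * (s * fst z - R * snd z) \<partial>gauss2)"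
proof -
  have stu_integrable: "integrable gauss2 (\<lambda>z. delta relu relu' Q R z * stu_pre Q R z)"
    using assms by (intro integrable_delta_relu_mult[where C = Q] abs_stu_pre_le) auto
  have tea_integrable: "integrable gauss2 (\<lambda>z. delta relu relu' Q R z * tea_pre z)"
    by (rule integrable_delta_relu_mult[where C = 1]) (use assms in \<open>auto simp: tea_pre_def\<close>)
  have "Q * tea_pre z - R * stu_pre Q R z = Q * s * (s * fst z - R * snd z)" for z
    using sqrt_one_minus_square(1)[OF assms(1)]
    unfolding tea_pre_def stu_pre_def s_def by (simp add: algebra_simps power2_eq_square)
  then have pointwise: "Q * (delta relu relu' Q R z * tea_pre z) - R * (delta relu relu' Q R z * stu_pre Q R z)
      = Q * s * (delta relu relu' Q R z * (s * fst z - R * snd z))" for z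
    by (metis (no_types, lifting) mult.left_commute right_diff_distrib)
  have "Q * I3 relu relu' Q R - R * I1 relu relu' Q R
      = (\<integral>z. Q * (delta relu relu' Q R z * tea_pre z) - R * (delta relu relu' Q R z * stu_pre Q R z) \<partial>gauss2)"
    unfolding I1_def I3_def using stu_integrable tea_integrable by simp
  also have "\<dots> = Q * s * (\<integral>z. delta relu relu' Q R z * (s * fst z - R * snd z) \<partial>gauss2)"
    unfolding pointwise by simp
  finally show ?thesis .
qed

lemma relu_orthogonal_correlation_pos:
  assumes "-1 < R" "R < 1" "0 < Q"
  defines "s \<equiv> sqrt (1 - R\<^sup>2)"
  shows "0 < (\<integral>z. delta relu relu' Q R z * (s * fst z - R * snd z) \<partial>gauss2)"
proof -
  have R: "\<bar>R\<bar> \<le> 1" and s_pos: "0 < s"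
    using assms(1,2) abs_square_less_1[of R] by (auto simp: s_def)
  define H where "H z = delta relu relu' Q R z * (s * fst z - R * snd z)" for z
  (* After the reflection, u = Q a and the orthogonal coordinate is b; averaging over b and -b
     cancels relu (Q a) and leaves b times an odd increment of the monotone relu. *)
  define G where "G z = relu' (Q * fst z) * (snd z * (relu (R * fst z + s * snd z) - relu (R * fst z - s * snd z)))" for z
  have [measurable]: "H \<in> borel_measurable (lborel \<Otimes>\<^sub>M lborel)"
    unfolding H_def by measurable
  have H_reflection: "H (reflection R z) = relu' (Q * fst z) * (relu (R * fst z + s * snd z) - relu (Q * fst z)) * snd z" for z
    using reflection_orthogonal_coordinate[OF R, of z] stu_pre_reflection[OF R, of Q z]
    unfolding H_def delta_def tea_pre_def s_def by (simp add: reflection_def)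
  have G_eq: "G z = H (reflection R z) + H (reflection R (fst z, - snd z))" for z
    unfolding G_def H_reflection by (simp add: algebra_simps)
  have "\<bar>s * fst z - R * snd z\<bar> \<le> 1 * (\<bar>fst z\<bar> + \<bar>snd z\<bar>)" for z
    using R s_pos sqrt_one_minus_square(2)[OF R, folded s_def]
    by (auto simp: abs_mult intro!: abs_triangle_ineq4[THEN order_trans] add_mono mult_left_le_one_le)
  then have H_integrable: "integrable gauss2 H"
    unfolding H_def using R assms(3) by (intro integrable_delta_relu_mult[where C = 1]) auto
  have reflection_invariant: "distr gauss2 (lborel \<Otimes>\<^sub>M lborel) (reflection R) = gauss2"
    using assms(1,2) by (intro gauss2_distr_reflection) auto
  have H_reflection_integrable: "integrable gauss2 (\<lambda>z. H (reflection R z))"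
    and "integral\<^sup>L gauss2 H = (\<integral>z. H (reflection R z) \<partial>gauss2)"
    using gauss2_integral_invariant[OF reflection_measurable reflection_invariant, of H] H_integrable
    by simp_all
  moreover have "integrable gauss2 (\<lambda>z. H (reflection R (fst z, - snd z)))"
    and "(\<integral>z. H (reflection R (fst z, - snd z)) \<partial>gauss2) = (\<integral>z. H (reflection R z) \<partial>gauss2)"
    using gauss2_integral_invariant[OF _ gauss2_distr_reflect_snd, of "\<lambda>z. H (reflection R z)"]
      H_reflection_integrable by simp_all
  ultimately have G_integrable: "integrable gauss2 G" and "integral\<^sup>L gauss2 G = 2 * integral\<^sup>L gauss2 H"
    unfolding G_eq by simp_all
  moreover have "0 < integral\<^sup>L gauss2 G"
    using relu_symmetrized_integral_pos[OF R assms(3) s_pos] G_integrable unfolding G_def by simp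
  ultimately show ?thesis
    unfolding H_def by simp
qed

lemma relu_overlap_drift_pos:
  assumes "-1 < R" "R < 1" "0 < Q"
  shows "0 < Q * I3 relu relu' Q R - R * I1 relu relu' Q R"
proof -
  have "0 < sqrt (1 - R\<^sup>2)"
    using assms(1,2) abs_square_less_1[of R] by simp
  then show ?thesis
    using relu_I3_I1_combination[of R Q] relu_orthogonal_correlation_pos[OF assms] assms by simp
qed

lemma I1_relu_aligned:
  assumes "0 < Q"
  shows "I1 relu relu' Q 1 = Q * (1 - Q) / 2"
    and "I1 relu relu' Q 1 = Q * I3 relu relu' Q 1"
proof -
  have "delta relu relu' Q 1 z * stu_pre Q 1 z = Q * (1 - Q) * (relu (fst z))\<^sup>2" for z
    using assms unfolding delta_def stu_pre_def tea_pre_def relu_def relu'_def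
    by (auto simp: power2_eq_square algebra_simps zero_less_mult_iff mult_le_0_iff max_def)
  then show "I1 relu relu' Q 1 = Q * (1 - Q) / 2"
    unfolding I1_def using gauss2_integral_fst(1)[of "\<lambda>x. (relu x)\<^sup>2"] std_normal_integral_relu_square(1)
    by simp
  show "I1 relu relu' Q 1 = Q * I3 relu relu' Q 1"
    unfolding I1_def I3_def by (simp add: stu_pre_def tea_pre_def mult.left_commute)
qed

lemma I1_relu_antialigned:
  assumes "0 < Q"
  shows "I1 relu relu' Q (-1) = - (Q\<^sup>2 / 2)"
proof -
  have "delta relu relu' Q (-1) z * stu_pre Q (-1) z = - (Q\<^sup>2) * (relu (- fst z))\<^sup>2" for z
    using assms unfolding delta_def stu_pre_def tea_pre_def relu_def relu'_def
    by (auto simp: power2_eq_square algebra_simps zero_less_mult_iff zero_le_mult_iff mult_less_0_iff max_def)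
  then show ?thesis
    unfolding I1_def using gauss2_integral_fst(1)[of "\<lambda>x. (relu (- x))\<^sup>2"] std_normal_integral_relu_square(2)
    by simp
qed

theorem proposition1:
  fixes \<eta> \<zeta> Q R L :: real
  assumes "\<eta> > 0" and "\<zeta> \<ge> 0"
    and "Q > 0" and "-1 \<le> R" and "R \<le> 1" and "L > 0"
  shows "is_fixed_point relu relu' \<eta> \<zeta> Q R L \<longleftrightarrow> (Q = 1 / (2 * \<zeta> + 1) \<and> R = 1)"
proof -
  consider "R = 1" | "R = -1" | "-1 < R" "R < 1"
    using assms(4,5) by linarith
  then show ?thesis
  proof cases
    case 1
    have "dQ relu relu' \<eta> \<zeta> Q R L = \<eta> * ((1 - Q) / 2 - \<zeta> * Q)"
      unfolding dQ_def 1 I1_relu_aligned(1)[OF assms(3)] using assms(3) by (simp add: field_simps)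
    moreover have "(1 - Q) / 2 - \<zeta> * Q = 0 \<longleftrightarrow> Q = 1 / (2 * \<zeta> + 1)"
      using assms(2) by (auto simp: field_simps)
    moreover have "dR relu relu' \<eta> \<zeta> Q R L = 0"
      unfolding dR_def 1 I1_relu_aligned(2)[OF assms(3)] by simp
    ultimately show ?thesis
      unfolding is_fixed_point_def dL_def using 1 assms(1) by simp
  next
    case 2
    have "dQ relu relu' \<eta> \<zeta> Q R L = - (\<eta> * Q * (1 / 2 + \<zeta>))"
      unfolding dQ_def 2 I1_relu_antialigned[OF assms(3)] using assms(3) by (simp add: field_simps power2_eq_square)
    moreover have "0 < \<eta> * Q * (1 / 2 + \<zeta>)"
      using assms(1-3) by simp
    ultimately show ?thesis
      unfolding is_fixed_point_def using 2 by auto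
  next
    case 3
    have "dR relu relu' \<eta> \<zeta> Q R L = \<eta> / L\<^sup>2 * (Q * I3 relu relu' Q R - R * I1 relu relu' Q R)"
      unfolding dR_def using assms(6) by (simp add: field_simps)
    moreover have "0 < \<eta> / L\<^sup>2 * (Q * I3 relu relu' Q R - R * I1 relu relu' Q R)"
      using relu_overlap_drift_pos[OF 3 assms(3)] assms(1,6) by simp
    ultimately show ?thesis
      unfolding is_fixed_point_def using 3 by auto
  qed
qed

end
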